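(* Fix $s>0$ and let $\Phi_s(x)=(1+e^{-sx})^{-1}$ be the sigmoid function and $\phi_s(x)=\Phi_s'(x)=se^{-sx}/(1+e^{-sx})^2$ the logistic density. Let $f:\mathbb{R}^3\to\mathbb{R}$ be a signed distance function (positive outside, negative inside) whose zero-level set $\{f=0\}$ is a smooth surface $\mathbb{S}$. Let $\mathbf{p}(t)=\mathbf{o}+t\mathbf{v}$, $t\ge 0$, be a ray with $\mathbf{o}\in\mathbb{R}^3$ and unit vector $\mathbf{v}$, and define the opaque density $$\rho(t)=\max\left(\frac{-\frac{\mathrm{d}}{\mathrm{d}t}\big[\Phi_s(f(\mathbf{p}(t)))\big]}{\Phi_s(f(\mathbf{p}(t)))},\,0\right),$$ the transmittance $T(t)=\exp\left(-\int_0^t\rho(u)\,\mathrm{d}u\right)$, and the weight $w(t)=T(t)\rho(t)$. Suppose the ray enters $\mathbb{S}$ from outside to inside at $\mathbf{p}(t^* )$, i.e. $f(\mathbf{p}(t^* ))=0$, and that there is an interval $[t_l,t_r]$ with $t^*\in[t_l,t_r]$ on which $t\mapsto f(\mathbf{p}(t))$ is monotonically decreasing. Suppose further that on this interval the surface is tangentially approximated by a planar patch, i.e. $\nabla f(\mathbf{p}(t))$ is constant for $t\in[t_l,t_r]$. Then the restriction of $w$ to $[t_l,t_r]$ attains its maximum at $t^*$.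
   Context: No surface intersections or other assumptions are imposed on the ray before $t_l$ (the ray may cross the surface several times before $t_l$). *)

theory Defs
  imports "HOL-Analysis.Analysis"
begin

definition sigmoid :: "real \<Rightarrow> real \<Rightarrow> real" where
  "sigmoid s x = 1 / (1 + exp (- s * x))"

definition logistic_density :: "real \<Rightarrow> real \<Rightarrow> real" where
  "logistic_density s x = s * exp (- s * x) / (1 + exp (- s * x))^2"

definition signed_distance_function :: "(real^3 \<Rightarrow> real) \<Rightarrow> bool" where
  "signed_distance_function f \<longleftrightarrow> (\<forall>x. \<bar>f x\<bar> = infdist x {y. f y = 0})"

definition ray :: "real^3 \<Rightarrow> real^3 \<Rightarrow> real \<Rightarrow> real^3" where
  "ray orig v t = orig + t *\<^sub>R v"

definition opaque_density ::
  "real \<Rightarrow> (real^3 \<Rightarrow> real) \<Rightarrow> real^3 \<Rightarrow> real^3 \<Rightarrow> real \<Rightarrow> real" where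
  "opaque_density s f orig v t =
     max (- deriv (\<lambda>u. sigmoid s (f (ray orig v u))) t / sigmoid s (f (ray orig v t))) 0"

definition transmittance ::
  "real \<Rightarrow> (real^3 \<Rightarrow> real) \<Rightarrow> real^3 \<Rightarrow> real^3 \<Rightarrow> real \<Rightarrow> real" where
  "transmittance s f orig v t = exp (- integral {0..t} (opaque_density s f orig v))"

definition render_weight ::
  "real \<Rightarrow> (real^3 \<Rightarrow> real) \<Rightarrow> real^3 \<Rightarrow> real^3 \<Rightarrow> real \<Rightarrow> real" where
  "render_weight s f orig v t = transmittance s f orig v t * opaque_density s f orig v t"

end

theory Submission
  imports Defs
begin

text \<open>On the planar patch the signed distance along the ray, h(t) = f(p(t)), has a constant
  derivative c \<le> 0. There the opaque density equals -c \<phi>_s(h)/\<Phi>_s(h), which is the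
  derivative of -ln \<Phi>_s(h); integrating gives T(t) = T(t_l) \<Phi>_s(h(t))/\<Phi>_s(h(t_l)), so the
  sigmoid cancels in w = T \<rho> and w(t) = K \<phi>_s(h(t)) with K \<ge> 0. The logistic density
  is maximal at 0 = h(t*).\<close>

lemma sigmoid_pos: "sigmoid s x > 0"
  unfolding sigmoid_def by (simp add: add_pos_pos)

lemma sigmoid_has_real_derivative:
  "(sigmoid s has_real_derivative logistic_density s x) (at x)"
proof -
  have "((\<lambda>x. 1 / (1 + exp (- s * x))) has_real_derivative
        - (exp (- s * x) * (- s)) / (1 + exp (- s * x))^2) (at x)"
    by (auto intro!: derivative_eq_intros simp: power2_eq_square add_pos_pos
             simp del: minus_mult_commute minus_mult_left)
       (metis add_pos_pos exp_gt_zero less_irrefl zero_less_one)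
  then show ?thesis
    unfolding sigmoid_def logistic_density_def by (simp add: mult.commute)
qed

lemma logistic_density_nonneg: "0 \<le> s \<Longrightarrow> 0 \<le> logistic_density s x"
  unfolding logistic_density_def by simp

lemma logistic_density_le_at_zero:
  assumes "0 \<le> s"
  shows "logistic_density s x \<le> logistic_density s 0"
proof -
  define y where "y = exp (- s * x)"
  have "0 \<le> (1 - y)^2" by simp
  also have "(1 - y)^2 = (1 + y)^2 - 4 * y" by (simp add: power2_eq_square algebra_simps)
  finally have "4 * y \<le> (1 + y)^2" by simp
  moreover have "0 < 1 + y" by (simp add: y_def add_pos_pos)
  then have "0 < (1 + y)^2" by simp
  ultimately have "y / (1 + y)^2 \<le> 1 / 4" by (simp add: field_simps)
  then have "s * (y / (1 + y)^2) \<le> s * (1 / 4)"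
    using assms by (rule mult_left_mono)
  then show ?thesis unfolding logistic_density_def y_def[symmetric] by simp
qed

lemma has_real_derivative_along_ray:
  assumes "GDERIV f (ray orig v t) :> g"
  shows "((\<lambda>u. f (ray orig v u)) has_real_derivative v \<bullet> g) (at t)"
proof -
  have "(ray orig v has_derivative (\<lambda>x. x *\<^sub>R v)) (at t)"
    unfolding ray_def by (auto intro!: derivative_eq_intros)
  moreover have "(f has_derivative (\<lambda>x. x \<bullet> g)) (at (ray orig v t))"
    using assms by (simp add: gderiv_def)
  ultimately have "((\<lambda>u. f (ray orig v u)) has_derivative (\<lambda>x. (x *\<^sub>R v) \<bullet> g)) (at t)"
    by (rule has_derivative_compose)
  moreover have "(\<lambda>x::real. (x *\<^sub>R v) \<bullet> g) = (*) (v \<bullet> g)"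
    by (auto simp: mult.commute)
  ultimately show ?thesis unfolding has_field_derivative_def by simp
qed

lemma opaque_density_eq_log_derivative:
  assumes "0 \<le> s" and "c \<le> 0"
    and h': "((\<lambda>u. f (ray orig v u)) has_real_derivative c) (at t)"
  shows "opaque_density s f orig v t =
           - c * logistic_density s (f (ray orig v t)) / sigmoid s (f (ray orig v t))"
proof -
  let ?h = "f (ray orig v t)"
  have "deriv (\<lambda>u. sigmoid s (f (ray orig v u))) t = logistic_density s ?h * c"
    using DERIV_chain2[OF sigmoid_has_real_derivative h'] by (rule DERIV_imp_deriv)
  moreover have "0 \<le> - c * logistic_density s ?h / sigmoid s ?h"
    using assms(1,2) logistic_density_nonneg sigmoid_pos
    by (simp add: divide_nonpos_pos mult_nonpos_nonneg)
  ultimately show ?thesis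
    unfolding opaque_density_def by (simp add: max_absorb1 mult.commute)
qed

lemma opaque_density_has_integral:
  assumes "0 \<le> s" and "c \<le> 0" and "a \<le> b"
    and h': "\<And>u. u \<in> {a..b} \<Longrightarrow> ((\<lambda>u. f (ray orig v u)) has_real_derivative c) (at u)"
  shows "(opaque_density s f orig v has_integral
           ln (sigmoid s (f (ray orig v a))) - ln (sigmoid s (f (ray orig v b)))) {a..b}"
proof -
  define L where "L u = - ln (sigmoid s (f (ray orig v u)))" for u
  have "(L has_vector_derivative opaque_density s f orig v u) (at u within {a..b})"
    if u: "u \<in> {a..b}" for u
  proof -
    let ?h = "f (ray orig v u)"
    have "(L has_real_derivative - (inverse (sigmoid s ?h) * (logistic_density s ?h * c))) (at u)"
      unfolding L_def
      by (rule DERIV_minus[OF DERIV_chain2[OF DERIV_ln[OF sigmoid_pos]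
                                             DERIV_chain2[OF sigmoid_has_real_derivative h'[OF u]]]])
    moreover have "- (inverse (sigmoid s ?h) * (logistic_density s ?h * c)) =
                   opaque_density s f orig v u"
      unfolding opaque_density_eq_log_derivative[OF assms(1,2) h'[OF u]]
      by (simp add: divide_inverse mult_ac)
    ultimately show ?thesis
      by (metis has_field_derivative_at_within has_real_derivative_iff_has_vector_derivative)
  qed
  then have "(opaque_density s f orig v has_integral L b - L a) {a..b}"
    using assms(3) by (intro fundamental_theorem_of_calculus) auto
  then show ?thesis by (simp add: L_def)
qed

lemma transmittance_split:
  assumes "0 \<le> a" and "a \<le> b" and "opaque_density s f orig v integrable_on {0..b}"
  shows "transmittance s f orig v b =
           transmittance s f orig v a * exp (- integral {a..b} (opaque_density s f orig v))"
  using Henstock_Kurzweil_Integration.integral_combine[OF assms]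
  by (simp add: transmittance_def flip: exp_add)

lemma render_weight_on_segment:
  assumes "0 \<le> s" and "c \<le> 0" and "0 \<le> a" and u: "u \<in> {a..b}"
    and h': "\<And>u. u \<in> {a..b} \<Longrightarrow> ((\<lambda>u. f (ray orig v u)) has_real_derivative c) (at u)"
    and integrable: "opaque_density s f orig v integrable_on {0..u}"
  shows "render_weight s f orig v u =
           - c * transmittance s f orig v a / sigmoid s (f (ray orig v a))
             * logistic_density s (f (ray orig v u))"
proof -
  let ?\<Phi> = "\<lambda>t. sigmoid s (f (ray orig v t))"
  have "integral {a..u} (opaque_density s f orig v) = ln (?\<Phi> a) - ln (?\<Phi> u)"
    using u h' by (intro integral_unique opaque_density_has_integral[OF assms(1,2)]) auto
  then have "transmittance s f orig v u = transmittance s f orig v a * ?\<Phi> u / ?\<Phi> a"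
    using transmittance_split[OF assms(3) _ integrable] u sigmoid_pos
    by (simp add: exp_diff)
  then show ?thesis
    unfolding render_weight_def opaque_density_eq_log_derivative[OF assms(1,2) h'[OF u]]
    using sigmoid_pos[of s "f (ray orig v u)"] by (simp add: field_simps)
qed

lemma render_weight_le_at_zero_crossing:
  assumes "0 \<le> s" and "c \<le> 0" and "0 \<le> a"
    and h': "\<And>u. u \<in> {a..b} \<Longrightarrow> ((\<lambda>u. f (ray orig v u)) has_real_derivative c) (at u)"
    and integrable: "\<forall>t\<ge>0. opaque_density s f orig v integrable_on {0..t}"
    and u: "u \<in> {a..b}" and t0: "t0 \<in> {a..b}" and zero: "f (ray orig v t0) = 0"
  shows "render_weight s f orig v u \<le> render_weight s f orig v t0"
proof -
  define K where "K = - c * transmittance s f orig v a / sigmoid s (f (ray orig v a))"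
  have "0 \<le> K"
    unfolding K_def using assms(2) sigmoid_pos
    by (simp add: transmittance_def mult_nonpos_nonneg divide_nonpos_pos)
  have weight: "render_weight s f orig v t = K * logistic_density s (f (ray orig v t))"
    if "t \<in> {a..b}" for t
    unfolding K_def using that assms(1-4) integrable
    by (intro render_weight_on_segment) auto
  have "render_weight s f orig v u = K * logistic_density s (f (ray orig v u))"
    using weight u .
  also have "\<dots> \<le> K * logistic_density s 0"
    using \<open>0 \<le> K\<close> assms(1) by (simp add: mult_left_mono logistic_density_le_at_zero)
  also have "\<dots> = render_weight s f orig v t0"
    using weight t0 zero by simp
  finally show ?thesis .
qed

lemma constant_derivative_nonpos_if_decreasing:
  fixes h :: "real \<Rightarrow> real"
  assumes "a < b" and "h b \<le> h a"
    and "\<And>u. u \<in> {a..b} \<Longrightarrow> (h has_real_derivative c) (at u)"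
  shows "c \<le> 0"
proof (rule ccontr)
  assume "\<not> c \<le> 0"
  then have "h a < h b"
    using assms(3) by (intro DERIV_pos_imp_increasing[OF assms(1)]) (metis atLeastAtMost_iff not_le)
  with assms(2) show False by simp
qed

theorem theorem1:
  fixes s :: real and f :: "real^3 \<Rightarrow> real" and orig v :: "real^3"
    and tl tr tstar :: real
  assumes s_pos: "s > 0"
    and sdf: "signed_distance_function f"
    and unit: "norm v = 1"
    and tl_nonneg: "0 \<le> tl"
    and tstar_in: "tstar \<in> {tl..tr}"
    and zero: "f (ray orig v tstar) = 0"
    and decr: "\<forall>x y. tl \<le> x \<longrightarrow> x \<le> y \<longrightarrow> y \<le> tr \<longrightarrow>
                  f (ray orig v y) \<le> f (ray orig v x)"
    and planar: "\<exists>g. \<forall>t\<in>{tl..tr}. GDERIV f (ray orig v t) :> g"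
    and rho_int: "\<forall>t\<ge>0. opaque_density s f orig v integrable_on {0..t}"
  shows "\<forall>t\<in>{tl..tr}. render_weight s f orig v t \<le> render_weight s f orig v tstar"
proof
  fix t assume t: "t \<in> {tl..tr}"
  obtain g where "\<forall>u\<in>{tl..tr}. GDERIV f (ray orig v u) :> g" using planar by blast
  then have h': "((\<lambda>u. f (ray orig v u)) has_real_derivative v \<bullet> g) (at u)"
    if "u \<in> {tl..tr}" for u
    using that has_real_derivative_along_ray by blast
  show "render_weight s f orig v t \<le> render_weight s f orig v tstar"
  proof (cases "tl < tr")
    case False
    then have "t = tstar" using t tstar_in by auto
    then show ?thesis by simp
  next
    case True
    then have "v \<bullet> g \<le> 0"
      using decr h' by (intro constant_derivative_nonpos_if_decreasing[of tl tr "\<lambda>u. f (ray orig v u)"]) auto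
    then show ?thesis
      using s_pos tl_nonneg h' rho_int t tstar_in zero
      by (intro render_weight_le_at_zero_crossing) auto
  qed
qed

end
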